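(* Let $F:\mathbb{R}^d\to\mathbb{R}$ be twice differentiable with $L_2$-Lipschitz Hessian. Let $x_k\in\mathbb{R}^d$, $s_k\in\mathbb{R}^d$, $\epsilon_1>0$, $M>0$, $\alpha,\beta\ge0$, and let $g_k\in\mathbb{R}^d$, $H_k\in\mathbb{R}^{d\times d}$ symmetric satisfy $\|H_k-\nabla^2F(x_k)\|\le\alpha\max\{\|s_k\|,\epsilon_1\}$ and $\|g_k-\nabla F(x_k)\|\le\beta\max\{\|s_k\|^2,\epsilon_1^2\}$. Let $s_{k+1}$ be a global minimizer of $s\mapsto g_k^\top s+\frac12 s^\top H_k s+\frac M6\|s\|^3$ and $x_{k+1}=x_k+s_{k+1}$. Then $$F(x_{k+1})-F(x_k)\le -\Big(\frac{3M-2L_2}{12}-2\beta-\alpha\Big)\|s_{k+1}\|^3+\Big(\beta+\frac\alpha2\Big)\|s_k\|^3+\Big(\beta+\frac\alpha2\Big)\epsilon_1^3 .$$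
   Context: $\|\cdot\|$ denotes the Euclidean norm for vectors and the spectral norm for matrices. *)

theory Defs
  imports "HOL-Analysis.Analysis"
begin

definition spec_norm :: "real^'n^'n \<Rightarrow> real" where
  "spec_norm A = onorm (\<lambda>v. A *v v)"

definition cubic_model :: "real^'n \<Rightarrow> real^'n^'n \<Rightarrow> real \<Rightarrow> real^'n \<Rightarrow> real" where
  "cubic_model g H M s = g \<bullet> s + (1/2) * (s \<bullet> (H *v s)) + (M/6) * norm s ^ 3"

end

theory Submission imports Defs begin

text \<open>Taylor's theorem with an \<open>L\<^sub>2\<close>-Lipschitz Hessian
  bounds \<open>F(x\<^sub>k + s) - F(x\<^sub>k)\<close> by the exact quadratic model plus \<open>L\<^sub>2/6 |s|\<^sup>3\<close>. A global
  minimiser \<open>s\<close> of the cubic model satisfies \<open>g\<^sup>Ts + s\<^sup>THs/2 \<le> -M/4 |s|\<^sup>3\<close>: comparing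
  with \<open>-s\<close> gives \<open>g\<^sup>Ts \<le> 0\<close>, and comparing with \<open>(1-\<delta>) s\<close> for small \<open>\<delta>\<close> gives the
  first-order condition \<open>g\<^sup>Ts + s\<^sup>THs + M/2 |s|\<^sup>3 \<le> 0\<close> along the ray. Replacing the exact
  model by the inexact one costs \<open>\<beta> m\<^sup>2 |s| + \<alpha>/2 m |s|\<^sup>2\<close> with \<open>m = max |s\<^sub>k| \<epsilon>\<^sub>1\<close>,
  and Young-type inequalities turn these mixed terms into cubes.\<close>

lemma norm_mult_vec_le_spec_norm: "norm (A *v v) \<le> spec_norm A * norm v"
  unfolding spec_norm_def by (rule onorm) simp

lemma abs_quadratic_form_le_spec_norm: "\<bar>s \<bullet> (A *v s)\<bar> \<le> spec_norm A * norm s ^ 2"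
proof -
  have "\<bar>s \<bullet> (A *v s)\<bar> \<le> norm s * norm (A *v s)" by (rule Cauchy_Schwarz_ineq2)
  also have "\<dots> \<le> norm s * (spec_norm A * norm s)"
    by (intro mult_left_mono norm_mult_vec_le_spec_norm) simp
  finally show ?thesis by (simp add: power2_eq_square algebra_simps)
qed

lemma has_derivative_along_line:
  assumes "\<And>x. (G has_derivative J x) (at x)"
  shows "((\<lambda>t::real. G (x + t *\<^sub>R s)) has_derivative (\<lambda>h. J (x + t *\<^sub>R s) (h *\<^sub>R s))) (at t)"
proof -
  have "((\<lambda>t. x + t *\<^sub>R s) has_derivative (\<lambda>h. h *\<^sub>R s)) (at t)"
    by (auto intro!: derivative_eq_intros)
  from has_derivative_compose[OF this assms] show ?thesis by (simp add: o_def)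
qed

context
  fixes F :: "real^'n \<Rightarrow> real"
    and gradF :: "real^'n \<Rightarrow> real^'n"
    and HessF :: "real^'n \<Rightarrow> real^'n^'n"
    and L2 :: real
  assumes grad: "\<And>x. (F has_derivative (\<lambda>h. gradF x \<bullet> h)) (at x)"
    and hess: "\<And>x. (gradF has_derivative (\<lambda>h. HessF x *v h)) (at x)"
    and lip: "\<And>x y. spec_norm (HessF x - HessF y) \<le> L2 * norm (x - y)"
begin

lemma gradient_along_line_le:
  assumes "0 \<le> t"
  shows "gradF (x + t *\<^sub>R s) \<bullet> s \<le> gradF x \<bullet> s + t * (s \<bullet> (HessF x *v s)) + L2/2 * t^2 * norm s ^ 3"
proof -
  define k where "k t = gradF (x + t *\<^sub>R s) \<bullet> s - gradF x \<bullet> s - t * (s \<bullet> (HessF x *v s))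
    - L2/2 * t^2 * norm s ^ 3" for t
  have dk: "(k has_real_derivative s \<bullet> ((HessF (x + t *\<^sub>R s) - HessF x) *v s) - L2 * t * norm s ^ 3) (at t)"
    for t
  proof -
    have "((\<lambda>t. gradF (x + t *\<^sub>R s) \<bullet> s) has_derivative (\<lambda>h. (HessF (x + t *\<^sub>R s) *v (h *\<^sub>R s)) \<bullet> s)) (at t)"
      using has_derivative_along_line[OF hess, of x s t] by (auto intro!: derivative_eq_intros)
    then have "((\<lambda>t. gradF (x + t *\<^sub>R s) \<bullet> s) has_real_derivative (HessF (x + t *\<^sub>R s) *v s) \<bullet> s) (at t)"
      unfolding has_field_derivative_def
      by (rule has_derivative_eq_rhs) (auto simp: matrix_vector_mult_scaleR algebra_simps)
    then show ?thesis unfolding k_def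
      by (auto intro!: derivative_eq_intros
          simp: matrix_vector_mult_diff_rdistrib inner_diff_right inner_commute algebra_simps)
  qed
  have "k t \<le> k 0"
  proof (rule DERIV_nonpos_imp_nonincreasing[OF assms])
    fix y assume y: "0 \<le> y" "y \<le> t"
    have "s \<bullet> ((HessF (x + y *\<^sub>R s) - HessF x) *v s) \<le> spec_norm (HessF (x + y *\<^sub>R s) - HessF x) * norm s ^ 2"
      using abs_quadratic_form_le_spec_norm abs_le_iff by blast
    also have "\<dots> \<le> L2 * (y * norm s) * norm s ^ 2"
      using lip[of "x + y *\<^sub>R s" x] y by (intro mult_right_mono) auto
    finally show "\<exists>d. (k has_real_derivative d) (at y) \<and> d \<le> 0"
      using dk by (intro exI conjI) (auto simp: power2_eq_square power3_eq_cube algebra_simps)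
  qed
  then show ?thesis by (simp add: k_def)
qed

lemma cubic_taylor_upper_bound:
  "F (x + s) - F x \<le> gradF x \<bullet> s + 1/2 * (s \<bullet> (HessF x *v s)) + L2/6 * norm s ^ 3"
proof -
  define h where "h t = F (x + t *\<^sub>R s) - F x - t * (gradF x \<bullet> s) - t^2/2 * (s \<bullet> (HessF x *v s))
    - L2/6 * t^3 * norm s ^ 3" for t
  have dh: "(h has_real_derivative gradF (x + t *\<^sub>R s) \<bullet> s - gradF x \<bullet> s - t * (s \<bullet> (HessF x *v s))
    - L2/2 * t^2 * norm s ^ 3) (at t)" for t
  proof -
    have "((\<lambda>t. F (x + t *\<^sub>R s)) has_real_derivative gradF (x + t *\<^sub>R s) \<bullet> s) (at t)"
      unfolding has_field_derivative_def
      by (rule has_derivative_eq_rhs[OF has_derivative_along_line[OF grad]]) (auto simp: algebra_simps)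
    then show ?thesis unfolding h_def
      by (auto intro!: derivative_eq_intros simp: algebra_simps power2_eq_square power3_eq_cube)
  qed
  have "h 1 \<le> h 0"
  proof (rule DERIV_nonpos_imp_nonincreasing[of 0 1 h])
    fix t :: real assume "0 \<le> t"
    then show "\<exists>d. (h has_real_derivative d) (at t) \<and> d \<le> 0"
      using dh[of t] gradient_along_line_le[of t x s] by (intro exI conjI) auto
  qed simp
  then show ?thesis by (simp add: h_def)
qed

end

lemma le_zero_if_le_mult_small:
  fixes c K :: real
  assumes "\<And>d. 0 < d \<Longrightarrow> d < 1 \<Longrightarrow> c \<le> d * K"
  shows "c \<le> 0"
proof (rule ccontr)
  assume "\<not> c \<le> 0"
  then have c: "c > 0" by simp
  define d where "d = min (1/2) (c / (2 * (\<bar>K\<bar> + 1)))"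
  have d: "0 < d" "d < 1" using c by (auto simp: d_def)
  have "c \<le> d * K" by (rule assms[OF d])
  also have "\<dots> \<le> d * (\<bar>K\<bar> + 1)" using d by (intro mult_left_mono) auto
  also have "\<dots> \<le> c / (2 * (\<bar>K\<bar> + 1)) * (\<bar>K\<bar> + 1)" by (intro mult_right_mono) (auto simp: d_def)
  also have "\<dots> = c / 2"
    using abs_ge_zero[of K] by (simp add: field_simps)
  finally show False using c by simp
qed

lemma cubic_model_minimiser_descent:
  assumes M: "M \<ge> 0" and minim: "\<And>s'. cubic_model g H M s \<le> cubic_model g H M s'"
  shows "g \<bullet> s + 1/2 * (s \<bullet> (H *v s)) \<le> - M/4 * norm s ^ 3"
proof -
  define a where "a = g \<bullet> s"
  define b where "b = s \<bullet> (H *v s)"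
  define r where "r = norm s"
  have "cubic_model g H M s \<le> cubic_model g H M (- s)" by (rule minim)
  moreover have "H *v (- s) = - (H *v s)"
    using matrix_vector_mult_scaleR[of H "-1" s] by simp
  ultimately have a: "a \<le> 0" by (simp add: cubic_model_def a_def)
  have "a + b + M/2 * r^3 \<le> d * (\<bar>b\<bar>/2 + M/2 * r^3)" if d: "0 < d" "d < 1" for d
  proof -
    have "cubic_model g H M s \<le> cubic_model g H M ((1-d) *\<^sub>R s)" by (rule minim)
    then have "a + b/2 + M/6 * r^3 \<le> (1-d) * a + (1-d)^2/2 * b + M/6 * (1-d)^3 * r^3"
      using d by (simp add: cubic_model_def a_def b_def r_def matrix_vector_mult_scaleR
          power_mult_distrib power2_eq_square)
    moreover have "(1-d) * a + (1-d)^2/2 * b + M/6 * (1-d)^3 * r^3 - (a + b/2 + M/6 * r^3)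
        = d * (d * b/2 + M/2 * r^3 * d - M/6 * r^3 * d^2 - (a + b + M/2 * r^3))"
      by (simp add: power2_eq_square power3_eq_cube algebra_simps divide_simps)
    ultimately have "0 \<le> d * (d * b/2 + M/2 * r^3 * d - M/6 * r^3 * d^2 - (a + b + M/2 * r^3))"
      by linarith
    then have "0 \<le> d * b/2 + M/2 * r^3 * d - M/6 * r^3 * d^2 - (a + b + M/2 * r^3)"
      using d by (simp add: zero_le_mult_iff)
    moreover have "M/6 * r^3 * d^2 \<ge> 0" using M by (simp add: r_def)
    moreover have "d * b \<le> d * \<bar>b\<bar>" using d by (simp add: mult_left_mono)
    ultimately show ?thesis by (simp add: algebra_simps)
  qed
  then have "a + b + M/2 * r^3 \<le> 0" by (rule le_zero_if_le_mult_small)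
  with a show ?thesis by (simp add: a_def b_def r_def)
qed

lemma inexact_quadratic_model_error:
  assumes "norm (g - g') \<le> eg" and "spec_norm (H - H') \<le> eH"
  shows "g' \<bullet> s + 1/2 * (s \<bullet> (H' *v s)) \<le> g \<bullet> s + 1/2 * (s \<bullet> (H *v s)) + eg * norm s + eH/2 * norm s ^ 2"
proof -
  have "g' \<bullet> s - g \<bullet> s \<le> \<bar>(g - g') \<bullet> s\<bar>" by (simp add: inner_diff_left)
  also have "\<dots> \<le> norm (g - g') * norm s" by (rule Cauchy_Schwarz_ineq2)
  also have "\<dots> \<le> eg * norm s" using assms(1) by (intro mult_right_mono) auto
  finally have gradient: "g' \<bullet> s \<le> g \<bullet> s + eg * norm s" by simp
  have "s \<bullet> (H' *v s) - s \<bullet> (H *v s) \<le> \<bar>s \<bullet> ((H - H') *v s)\<bar>"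
    by (simp add: matrix_vector_mult_diff_rdistrib inner_diff_right)
  also have "\<dots> \<le> spec_norm (H - H') * norm s ^ 2" by (rule abs_quadratic_form_le_spec_norm)
  also have "\<dots> \<le> eH * norm s ^ 2" using assms(2) by (intro mult_right_mono) auto
  finally show ?thesis using gradient by simp
qed

lemma sq_mult_le_cube_add_cube:
  fixes m r :: real
  assumes "0 \<le> m" "0 \<le> r"
  shows "m^2 * r \<le> m^3 + r^3"
proof (cases "m \<le> r")
  case True
  then have "m^2 * r \<le> r^2 * r" using assms by (intro mult_right_mono power_mono) auto
  then show ?thesis using assms by (simp add: power2_eq_square power3_eq_cube add_increasing)
next
  case False
  then have "m^2 * r \<le> m^2 * m" using assms by (intro mult_left_mono) auto
  then show ?thesis using assms by (simp add: power2_eq_square power3_eq_cube add_increasing2)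
qed

lemma max_cube_le_cube_add_cube:
  fixes a b :: real
  assumes "0 \<le> a" "0 \<le> b"
  shows "max a b ^ 3 \<le> a^3 + b^3"
  using assms by (auto simp: max_def)

theorem mainTheorem2:
  fixes F :: "real^'n \<Rightarrow> real"
    and gradF :: "real^'n \<Rightarrow> real^'n"
    and HessF :: "real^'n \<Rightarrow> real^'n^'n"
    and L2 \<epsilon>1 M \<alpha> \<beta> :: real
    and xk sk gk sk1 xk1 :: "real^'n"
    and Hk :: "real^'n^'n"
  assumes grad: "\<And>x. (F has_derivative (\<lambda>h. gradF x \<bullet> h)) (at x)"
    and hess: "\<And>x. (gradF has_derivative (\<lambda>h. HessF x *v h)) (at x)"
    and lip: "\<And>x y. spec_norm (HessF x - HessF y) \<le> L2 * norm (x - y)"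
    and eps: "\<epsilon>1 > 0" and Mpos: "M > 0" and alpha: "\<alpha> \<ge> 0" and beta: "\<beta> \<ge> 0"
    and Hsym: "transpose Hk = Hk"
    and Herr: "spec_norm (Hk - HessF xk) \<le> \<alpha> * max (norm sk) \<epsilon>1"
    and gerr: "norm (gk - gradF xk) \<le> \<beta> * max ((norm sk)\<^sup>2) (\<epsilon>1\<^sup>2)"
    and minim: "\<And>s. cubic_model gk Hk M sk1 \<le> cubic_model gk Hk M s"
    and step: "xk1 = xk + sk1"
  shows "F xk1 - F xk \<le>
           - ((3 * M - 2 * L2) / 12 - 2 * \<beta> - \<alpha>) * norm sk1 ^ 3
           + (\<beta> + \<alpha> / 2) * norm sk ^ 3 + (\<beta> + \<alpha> / 2) * \<epsilon>1 ^ 3"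
proof -
  define r where "r = norm sk1"
  define m where "m = max (norm sk) \<epsilon>1"
  have r: "0 \<le> r" and m: "0 \<le> m" using eps by (auto simp: r_def m_def)
  have "max ((norm sk)\<^sup>2) (\<epsilon>1\<^sup>2) = m^2"
    using eps by (auto simp: m_def max_def power_mono)
  then have "gradF xk \<bullet> sk1 + 1/2 * (sk1 \<bullet> (HessF xk *v sk1))
      \<le> gk \<bullet> sk1 + 1/2 * (sk1 \<bullet> (Hk *v sk1)) + \<beta> * (m^2 * r) + \<alpha>/2 * (m * r^2)"
    using inexact_quadratic_model_error[OF gerr Herr, of sk1] by (simp add: r_def m_def mult.assoc)
  then have descent: "F xk1 - F xk \<le> (L2/6 - M/4) * r^3 + \<beta> * (m^2 * r) + \<alpha>/2 * (m * r^2)"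
    using cubic_taylor_upper_bound[OF grad hess lip, of xk sk1]
      cubic_model_minimiser_descent[of M gk Hk sk1] Mpos minim
    by (simp add: step r_def algebra_simps)
  let ?C = "norm sk ^ 3 + \<epsilon>1 ^ 3 + 2 * r^3"
  have m3: "m^3 \<le> norm sk ^ 3 + \<epsilon>1 ^ 3"
    unfolding m_def using eps by (intro max_cube_le_cube_add_cube) auto
  have r3: "0 \<le> r^3" using r by simp
  have "m^2 * r \<le> ?C" using sq_mult_le_cube_add_cube[OF m r] m3 r3 by linarith
  moreover have "m * r^2 \<le> ?C"
    using sq_mult_le_cube_add_cube[OF r m] m3 r3 by (subst mult.commute) linarith
  ultimately have "\<beta> * (m^2 * r) \<le> \<beta> * ?C" and "\<alpha>/2 * (m * r^2) \<le> \<alpha>/2 * ?C"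
    using alpha beta by (simp_all add: mult_left_mono)
  moreover have "- ((3 * M - 2 * L2) / 12 - 2 * \<beta> - \<alpha>) * r ^ 3
      + (\<beta> + \<alpha> / 2) * norm sk ^ 3 + (\<beta> + \<alpha> / 2) * \<epsilon>1 ^ 3
      = (L2/6 - M/4) * r^3 + \<beta> * ?C + \<alpha>/2 * ?C"
    by (simp add: algebra_simps divide_simps)
  ultimately show ?thesis using descent unfolding r_def by linarith
qed

end
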